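(* Let $\mu$ be a probability measure on $\partial\mathbb{D}$ and $\{\Phi_n\}_{n=0}^N$ its monic orthogonal polynomials, where $N=\infty$ if $\mu$ has infinite support and $N=\#\mathrm{supp}(\mu)$ otherwise. Let $z_0$ be an isolated point of $\mathrm{supp}(\mu)$ and $d=\mathrm{dist}(z_0,\mathrm{supp}(\mu)\setminus\{z_0\})$. Then for each $n<N$, the disk $\{z:|z-z_0|<d^2/4\}$ contains at most one zero of $\Phi_n$.
   Context: $\Phi_n$ is the monic polynomial of degree $n$ orthogonal in $L^2(\mu)$ to all polynomials of degree less than $n$. *)

theory Defs
  imports "HOL-Probability.Probability" "HOL-Computational_Algebra.Polynomial"
begin

definition circle_prob_measure :: "complex measure \<Rightarrow> bool" where
  "circle_prob_measure M \<longleftrightarrow> prob_space M \<and> sets M = sets borel \<and>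
     emeasure M {z. cmod z \<noteq> 1} = 0"

definition msupp :: "complex measure \<Rightarrow> complex set" where
  "msupp M = {z. \<forall>e>0. emeasure M (ball z e) > 0}"

definition monic_OP :: "complex measure \<Rightarrow> nat \<Rightarrow> complex poly \<Rightarrow> bool" where
  "monic_OP M n p \<longleftrightarrow> degree p = n \<and> lead_coeff p = 1 \<and>
     (\<forall>q :: complex poly. degree q < n \<longrightarrow>
        integral\<^sup>L M (\<lambda>z. poly p z * cnj (poly q z)) = 0)"

end

(*
  Write p = (z - a) (z - b) R with a, b in the disk. The space V = span {R, z R} consists of
  polynomials of degree < n, so it is orthogonal to p. Multiplication by z is unitary on
  L^2(mu), hence its compression T to V is a contraction; since z (z - b) R = a (z - b) R + p,
  T is upper triangular with diagonal a, b in a suitable orthonormal basis of V. A triangular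
  contraction [a, c; 0, b] satisfies |c|^2 <= (1 - |a|^2) (1 - |b|^2), which for |z0| = 1 and
  |a - z0|, |b - z0| < r confines the numerical range of T to the disk of radius 2 r about z0.
  On the other hand g = (z - z0) R lies in V and vanishes at z0, while mu lives on the circle at
  distance >= d from z0 elsewhere, so Re (conj z0 <z g, g>) <= (1 - d^2 / 2) |g|^2: the point
  <T g, g> / |g|^2 is at distance >= d^2 / 2 from z0. For r = d^2 / 4 this is a contradiction.
*)

theory Submission
  imports Defs
begin

section \<open>Triangular contractions of a two-dimensional space\<close>

lemma cmod_add_power2: "(cmod (u + v))\<^sup>2 = (cmod u)\<^sup>2 + (cmod v)\<^sup>2 + 2 * Re (u * cnj v)"
  by (simp add: cmod_power2 power2_sum algebra_simps)

lemma hermitian_form_nonneg_imp_det_nonneg: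
  fixes \<alpha> \<gamma> :: real and \<beta> :: complex
  assumes nonneg: "\<And>x y. 0 \<le> \<alpha> * (cmod x)\<^sup>2 + 2 * Re (\<beta> * cnj x * y) + \<gamma> * (cmod y)\<^sup>2"
  shows "(cmod \<beta>)\<^sup>2 \<le> \<alpha> * \<gamma>"
proof -
  have "\<alpha> \<ge> 0" using nonneg[of 1 0] by simp
  show ?thesis
  proof (cases "\<alpha> = 0")
    case False
    then have "\<alpha> > 0" using \<open>\<alpha> \<ge> 0\<close> by simp
    have "0 \<le> \<alpha> * (cmod (- \<beta> / \<alpha>))\<^sup>2 + 2 * Re (\<beta> * cnj (- \<beta> / \<alpha>) * 1) + \<gamma> * (cmod 1)\<^sup>2"
      by (rule nonneg)
    also have "\<dots> = \<gamma> - (cmod \<beta>)\<^sup>2 / \<alpha>"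
      using \<open>\<alpha> > 0\<close>
      by (simp add: norm_divide power_divide cmod_power2 field_simps) (simp add: power2_eq_square algebra_simps)
    finally show ?thesis
      using \<open>\<alpha> > 0\<close> by (simp add: field_simps)
  next
    case True
    have "\<beta> = 0"
    proof (rule ccontr)
      assume "\<beta> \<noteq> 0"
      define t where "t = (\<gamma> + 1) / (2 * (cmod \<beta>)\<^sup>2)"
      have "Re (\<beta> * cnj (- of_real t * \<beta>)) = - t * (cmod \<beta>)\<^sup>2"
        by (simp add: cmod_power2 algebra_simps) (simp add: power2_eq_square)
      then have "0 \<le> - 2 * t * (cmod \<beta>)\<^sup>2 + \<gamma>"
        using nonneg[of "- of_real t * \<beta>" 1] True by simp
      also have "\<dots> = - 1"
        using \<open>\<beta> \<noteq> 0\<close> by (simp add: t_def field_simps)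
      finally show False by simp
    qed
    then show ?thesis using True by simp
  qed
qed

lemma triangular_contraction_corner_power2_le:
  assumes contraction: "\<And>x y. (cmod (x * a + y * c))\<^sup>2 + (cmod (y * b))\<^sup>2 \<le> (cmod x)\<^sup>2 + (cmod y)\<^sup>2"
  shows "(cmod c)\<^sup>2 \<le> (1 - (cmod a)\<^sup>2) * (1 - (cmod b)\<^sup>2)"
proof -
  have "(cmod (- cnj a * c))\<^sup>2 \<le> (1 - (cmod a)\<^sup>2) * (1 - (cmod b)\<^sup>2 - (cmod c)\<^sup>2)"
  proof (rule hermitian_form_nonneg_imp_det_nonneg)
    fix x y
    have "Re (x * a * cnj (y * c)) = Re (cnj a * c * cnj x * y)"
      by (simp; algebra)
    then show "0 \<le> (1 - (cmod a)\<^sup>2) * (cmod x)\<^sup>2 + 2 * Re (- cnj a * c * cnj x * y)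
        + (1 - (cmod b)\<^sup>2 - (cmod c)\<^sup>2) * (cmod y)\<^sup>2"
      using contraction[of x y] by (simp add: cmod_add_power2 norm_mult power_mult_distrib algebra_simps)
  qed
  then show ?thesis
    by (simp add: norm_mult power_mult_distrib algebra_simps)
qed

lemma one_minus_cmod_power2_le:
  assumes "cmod a \<le> 1" "cmod w = 1"
  shows "1 - (cmod a)\<^sup>2 \<le> 2 * cmod (a - w)"
proof -
  have "1 - (cmod a)\<^sup>2 = (1 - cmod a) * (1 + cmod a)"
    by (simp add: power2_eq_square algebra_simps)
  also have "\<dots> \<le> (1 - cmod a) * 2"
    using assms(1) by (intro mult_left_mono) auto
  also have "1 - cmod a \<le> cmod (a - w)"
    using norm_triangle_ineq3[of w a] assms(2) by (simp add: norm_minus_commute)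
  finally show ?thesis by simp
qed

lemma triangular_contraction_corner_near_circle:
  assumes contraction: "\<And>x y. (cmod (x * a + y * c))\<^sup>2 + (cmod (y * b))\<^sup>2 \<le> (cmod x)\<^sup>2 + (cmod y)\<^sup>2"
    and "cmod w = 1" "cmod (a - w) < r" "cmod (b - w) < r"
  shows "cmod c \<le> 2 * r"
proof -
  have "(cmod a)\<^sup>2 \<le> 1"
    using contraction[of 1 0] by simp
  then have "cmod a \<le> 1"
    by (simp add: abs_square_le_1)
  have "(cmod c)\<^sup>2 + (cmod b)\<^sup>2 \<le> 1"
    using contraction[of 0 1] by simp
  then have "(cmod b)\<^sup>2 \<le> 1"
    using zero_le_power2[of "cmod c"] by linarith
  then have "cmod b \<le> 1"
    by (simp add: abs_square_le_1)
  have a_near: "0 \<le> 1 - (cmod a)\<^sup>2" "1 - (cmod a)\<^sup>2 \<le> 2 * r"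
    using \<open>(cmod a)\<^sup>2 \<le> 1\<close> one_minus_cmod_power2_le[OF \<open>cmod a \<le> 1\<close> \<open>cmod w = 1\<close>] assms(3)
    by linarith+
  have b_near: "0 \<le> 1 - (cmod b)\<^sup>2" "1 - (cmod b)\<^sup>2 \<le> 2 * r"
    using \<open>(cmod b)\<^sup>2 \<le> 1\<close> one_minus_cmod_power2_le[OF \<open>cmod b \<le> 1\<close> \<open>cmod w = 1\<close>] assms(4)
    by linarith+
  have "(cmod c)\<^sup>2 \<le> (1 - (cmod a)\<^sup>2) * (1 - (cmod b)\<^sup>2)"
    by (rule triangular_contraction_corner_power2_le[OF contraction])
  also have "\<dots> \<le> (2 * r)\<^sup>2"
    unfolding power2_eq_square[of "2 * r"] using a_near b_near by (intro mult_mono) auto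
  finally show ?thesis
    by (rule power2_le_imp_le) (use a_near in linarith)
qed

lemma triangular_contraction_numerical_range:
  assumes contraction: "\<And>x y. (cmod (x * a + y * c))\<^sup>2 + (cmod (y * b))\<^sup>2 \<le> (cmod x)\<^sup>2 + (cmod y)\<^sup>2"
    and "cmod w = 1" "cmod (a - w) < r" "cmod (b - w) < r" "x \<noteq> 0 \<or> y \<noteq> 0"
  shows "cmod ((x * a + y * c) * cnj x + y * b * cnj y - w * of_real ((cmod x)\<^sup>2 + (cmod y)\<^sup>2))
           < 2 * r * ((cmod x)\<^sup>2 + (cmod y)\<^sup>2)"
proof -
  have "cmod c \<le> 2 * r" and "r > 0"
    using triangular_contraction_corner_near_circle[OF contraction assms(2-4)] assms(3)
    by (auto intro: le_less_trans[OF norm_ge_zero])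
  define X Y where "X = (cmod x)\<^sup>2" and "Y = (cmod y)\<^sup>2"
  have "X \<ge> 0" "Y \<ge> 0" "X + Y > 0"
    using assms(5) by (auto simp: X_def Y_def add_pos_nonneg add_nonneg_pos)
  have identity: "(x * a + y * c) * cnj x + y * b * cnj y - w * of_real (X + Y)
      = of_real X * (a - w) + of_real Y * (b - w) + c * y * cnj x"
    unfolding X_def Y_def of_real_add complex_norm_square by (simp add: algebra_simps)
  have diagonal: "cmod (of_real X * (a - w) + of_real Y * (b - w)) < r * (X + Y)"
  proof -
    have "cmod (of_real X * (a - w) + of_real Y * (b - w)) \<le> X * cmod (a - w) + Y * cmod (b - w)"
      using norm_triangle_ineq[of "of_real X * (a - w)" "of_real Y * (b - w)"]
      by (simp add: norm_mult X_def Y_def del: of_real_power)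
    also have "\<dots> < X * r + Y * r"
    proof (cases "X = 0")
      case True
      then show ?thesis
        using \<open>X + Y > 0\<close> assms(4) by simp
    next
      case False
      then have "X * cmod (a - w) < X * r"
        using \<open>X \<ge> 0\<close> assms(3) by simp
      moreover have "Y * cmod (b - w) \<le> Y * r"
        using \<open>Y \<ge> 0\<close> assms(4) by (simp add: mult_left_mono)
      ultimately show ?thesis by linarith
    qed
    finally show ?thesis by (simp add: algebra_simps)
  qed
  have off_diagonal: "cmod (c * y * cnj x) \<le> r * (X + Y)"
  proof -
    have "cmod (c * y * cnj x) \<le> 2 * r * (cmod x * cmod y)"
      using mult_right_mono[OF \<open>cmod c \<le> 2 * r\<close>, of "cmod x * cmod y"]
      by (simp add: norm_mult mult_ac)
    also have "\<dots> \<le> r * (X + Y)"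
      using mult_left_mono[OF sum_squares_bound[of "cmod x" "cmod y"], of r] \<open>r > 0\<close>
      by (simp add: X_def Y_def algebra_simps)
    finally show ?thesis .
  qed
  show ?thesis
    unfolding X_def[symmetric] Y_def[symmetric] identity
    using norm_triangle_ineq[of "of_real X * (a - w) + of_real Y * (b - w)" "c * y * cnj x"]
      diagonal off_diagonal by linarith
qed

section \<open>Probability measures on the unit circle\<close>

lemma Re_cnj_mult_on_circle:
  assumes "cmod z = 1" "cmod w = 1"
  shows "Re (cnj w * z) = 1 - (cmod (z - w))\<^sup>2 / 2"
proof -
  have "(cmod (z - w))\<^sup>2 = (cmod z)\<^sup>2 + (cmod w)\<^sup>2 - 2 * Re (cnj w * z)"
    by (simp add: cmod_power2 power2_diff algebra_simps)
  with assms show ?thesis by (simp add: field_simps)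
qed

locale circle_measure =
  fixes M :: "complex measure"
  assumes circle_prob_measure: "circle_prob_measure M"
begin

sublocale prob_space M
  using circle_prob_measure unfolding circle_prob_measure_def by blast

lemma sets_eq_borel: "sets M = sets borel"
  using circle_prob_measure unfolding circle_prob_measure_def by blast

lemma AE_on_circle: "AE z in M. cmod z = 1"
proof (rule AE_I')
  have "{z::complex. cmod z \<noteq> 1} \<in> sets M" by (simp add: sets_eq_borel)
  then show "{z. cmod z \<noteq> 1} \<in> null_sets M"
    using circle_prob_measure unfolding circle_prob_measure_def by blast
qed auto

lemma AE_in_msupp: "AE z in M. z \<in> msupp M"
proof -
  define \<F> where "\<F> = {ball x e |x e. emeasure M (ball x e) = 0}"
  obtain \<F>' where \<F>': "\<F>' \<subseteq> \<F>" "countable \<F>'" "\<Union>\<F>' = \<Union>\<F>"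
    by (rule Lindelof[of \<F>]) (auto simp: \<F>_def)
  have "\<Union>\<F>' \<in> null_sets M"
    using \<F>' by (intro null_sets_UN'[where N = id, simplified]) (auto simp: \<F>_def null_sets_def sets_eq_borel)
  moreover have "- msupp M \<subseteq> \<Union>\<F>"
    by (force simp: msupp_def \<F>_def not_less)
  ultimately show ?thesis
    using \<F>'(3) by (intro AE_I'[of "\<Union>\<F>'"]) auto
qed

lemma msupp_subset_zero_set:
  fixes f :: "complex \<Rightarrow> 'b::real_normed_vector"
  assumes "continuous_on UNIV f" "AE z in M. f z = 0"
  shows "msupp M \<subseteq> {z. f z = 0}"
proof
  have U: "open {z. f z \<noteq> 0}"
    using assms(1) by (intro open_Collect_neq) auto
  with assms(2) have null: "{z. f z \<noteq> 0} \<in> null_sets M"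
    using AE_iff_null_sets[of "{z. f z \<noteq> 0}" M] by (simp add: sets_eq_borel borel_open)
  fix x assume x: "x \<in> msupp M"
  show "x \<in> {z. f z = 0}"
  proof (rule ccontr)
    assume "x \<notin> {z. f z = 0}"
    then obtain e where "e > 0" "ball x e \<subseteq> {z. f z \<noteq> 0}"
      using U open_contains_ball by blast
    then have "ball x e \<in> null_sets M"
      by (intro null_sets_subset[OF null]) (auto simp: sets_eq_borel)
    then have "emeasure M (ball x e) = 0"
      by blast
    with x \<open>e > 0\<close> show False by (auto simp: msupp_def)
  qed
qed

lemma msupp_subset_sphere: "msupp M \<subseteq> sphere 0 1"
proof -
  have "msupp M \<subseteq> {z. cmod z - 1 = 0}"
    using AE_on_circle by (intro msupp_subset_zero_set continuous_intros) auto
  then show ?thesis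
    by auto
qed

lemma integrable_continuous:
  fixes f :: "complex \<Rightarrow> 'b::{banach, second_countable_topology}"
  assumes "continuous_on UNIV f"
  shows "integrable M f"
proof -
  have "compact (f ` sphere 0 1)"
    using assms by (intro compact_continuous_image) (auto intro: continuous_on_subset)
  then obtain B where B: "\<And>z. cmod z = 1 \<Longrightarrow> norm (f z) \<le> B"
    by (metis compact_imp_bounded bounded_iff image_eqI mem_sphere_0)
  have "AE z in M. norm (f z) \<le> B"
    using AE_on_circle by eventually_elim (rule B)
  moreover have "f \<in> borel_measurable M"
    using borel_measurable_continuous_onI[OF assms] by (simp add: measurable_cong_sets[OF sets_eq_borel refl])
  ultimately show ?thesis
    by (intro integrable_const_bound)
qed

end

definition poly_inner :: "complex measure \<Rightarrow> complex poly \<Rightarrow> complex poly \<Rightarrow> complex" where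
  "poly_inner M p q = (LINT z|M. poly p z * cnj (poly q z))"

context circle_measure
begin

lemma integrable_poly_mult_cnj: "integrable M (\<lambda>z. poly p z * cnj (poly q z))"
  by (intro integrable_continuous continuous_intros)

lemma poly_inner_add_left: "poly_inner M (p + q) r = poly_inner M p r + poly_inner M q r"
  unfolding poly_inner_def
  by (simp add: distrib_right Bochner_Integration.integral_add[OF integrable_poly_mult_cnj integrable_poly_mult_cnj])

lemma poly_inner_diff_left: "poly_inner M (p - q) r = poly_inner M p r - poly_inner M q r"
  unfolding poly_inner_def
  by (simp add: left_diff_distrib Bochner_Integration.integral_diff[OF integrable_poly_mult_cnj integrable_poly_mult_cnj])

lemma poly_inner_smult_left: "poly_inner M (smult c p) q = c * poly_inner M p q"
  unfolding poly_inner_def by (simp add: mult.assoc)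

lemma poly_inner_cnj: "cnj (poly_inner M p q) = poly_inner M q p"
proof -
  have "cnj (poly_inner M p q) = (LINT z|M. cnj (poly p z * cnj (poly q z)))"
    unfolding poly_inner_def by (rule Bochner_Integration.integral_cnj[symmetric])
  also have "\<dots> = poly_inner M q p"
    unfolding poly_inner_def by (simp add: mult.commute)
  finally show ?thesis .
qed

lemma poly_inner_add_right: "poly_inner M r (p + q) = poly_inner M r p + poly_inner M r q"
  by (metis poly_inner_cnj poly_inner_add_left complex_cnj_add)

lemma poly_inner_smult_right: "poly_inner M p (smult c q) = cnj c * poly_inner M p q"
  by (metis poly_inner_cnj poly_inner_smult_left complex_cnj_mult)

lemmas poly_inner_sesquilinear =
  poly_inner_add_left poly_inner_add_right poly_inner_diff_left
  poly_inner_smult_left poly_inner_smult_right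

lemma poly_inner_self: "poly_inner M p p = of_real (LINT z|M. (cmod (poly p z))\<^sup>2)"
  unfolding poly_inner_def complex_norm_square[symmetric] by (rule integral_complex_of_real)

lemma poly_inner_self_eq_Re: "poly_inner M p p = of_real (Re (poly_inner M p p))"
  unfolding poly_inner_self by simp

lemma poly_inner_pCons_zero: "poly_inner M (pCons 0 p) (pCons 0 q) = poly_inner M p q"
  unfolding poly_inner_def
proof (rule integral_cong_AE)
  show "AE z in M. poly (pCons 0 p) z * cnj (poly (pCons 0 q) z) = poly p z * cnj (poly q z)"
    using AE_on_circle
  proof eventually_elim
    case (elim z)
    then have "z * cnj z = 1" by (simp add: complex_norm_square[symmetric])
    then show ?case by (simp add: algebra_simps)
  qed
qed (intro borel_measurable_integrable integrable_continuous continuous_intros)+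

lemma Re_poly_inner_self_pos:
  assumes "q \<noteq> 0" "infinite (msupp M) \<or> degree q < card (msupp M)"
  shows "Re (poly_inner M q q) > 0"
proof (rule ccontr)
  assume "\<not> ?thesis"
  moreover have "0 \<le> (LINT z|M. (cmod (poly q z))\<^sup>2)" by simp
  ultimately have "(LINT z|M. (cmod (poly q z))\<^sup>2) = 0"
    unfolding poly_inner_self by simp
  moreover have "integrable M (\<lambda>z. (cmod (poly q z))\<^sup>2)"
    by (intro integrable_continuous continuous_intros)
  ultimately have "AE z in M. poly q z = 0"
    by (simp add: integral_nonneg_eq_0_iff_AE)
  then have "msupp M \<subseteq> {z. poly q z = 0}"
    by (intro msupp_subset_zero_set continuous_intros)
  then have "finite (msupp M) \<and> card (msupp M) \<le> degree q"
    using assms(1) poly_roots_finite card_poly_roots_bound by (metis card_mono finite_subset le_trans)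
  with assms(2) show False by linarith
qed

lemma Re_cnj_poly_inner_pCons_zero_le:
  assumes "cmod z0 = 1" "poly g z0 = 0" "0 \<le> \<delta>"
    and far: "\<And>z. z \<in> msupp M \<Longrightarrow> z \<noteq> z0 \<Longrightarrow> \<delta> \<le> cmod (z - z0)"
  shows "Re (cnj z0 * poly_inner M (pCons 0 g) g) \<le> (1 - \<delta>\<^sup>2 / 2) * Re (poly_inner M g g)"
proof -
  have pointwise: "Re (cnj z0 * (z * poly g z * cnj (poly g z))) = Re (cnj z0 * z) * (cmod (poly g z))\<^sup>2"
    for z
    by (simp add: mult.assoc complex_norm_square[symmetric] algebra_simps)
  have "Re (cnj z0 * poly_inner M (pCons 0 g) g)
      = Re (LINT z|M. cnj z0 * (z * poly g z * cnj (poly g z)))"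
    unfolding poly_inner_def by simp
  also have "\<dots> = (LINT z|M. Re (cnj z0 * z) * (cmod (poly g z))\<^sup>2)"
    unfolding pointwise[symmetric]
    by (intro integral_Re[symmetric] integrable_continuous continuous_intros)
  also have "\<dots> \<le> (LINT z|M. (1 - \<delta>\<^sup>2 / 2) * (cmod (poly g z))\<^sup>2)"
  proof (intro integral_mono_AE integrable_continuous continuous_intros)
    show "AE z in M. Re (cnj z0 * z) * (cmod (poly g z))\<^sup>2 \<le> (1 - \<delta>\<^sup>2 / 2) * (cmod (poly g z))\<^sup>2"
      using AE_on_circle AE_in_msupp
    proof eventually_elim
      case (elim z)
      show ?case
      proof (cases "z = z0")
        case False
        then have "\<delta>\<^sup>2 \<le> (cmod (z - z0))\<^sup>2"
          using far elim assms(3) by (intro power_mono) auto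
        then show ?thesis
          using Re_cnj_mult_on_circle[OF elim(1) assms(1)] by (intro mult_right_mono) auto
      qed (use assms(2) in simp)
    qed
  qed
  also have "\<dots> = (1 - \<delta>\<^sup>2 / 2) * Re (poly_inner M g g)"
    by (simp add: poly_inner_self)
  finally show ?thesis .
qed

end

section \<open>Compression of multiplication by z\<close>

lemma pCons_zero_smult_add:
  fixes u v p :: "'a::comm_ring_1 poly"
  assumes "pCons 0 u = smult a u + smult \<gamma> p" "pCons 0 v = smult c u + smult b v + smult \<delta> p"
  shows "pCons 0 (smult x u + smult y v) = smult (x * a + y * c) u + smult (y * b) v + smult (x * \<gamma> + y * \<delta>) p"
proof -
  have "pCons 0 (smult x u + smult y v) = smult x (pCons 0 u) + smult y (pCons 0 v)"
    by simp
  also have "\<dots> = smult (x * a + y * c) u + smult (y * b) v + smult (x * \<gamma> + y * \<delta>) p"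
    unfolding assms by (simp add: smult_add_right smult_add_left algebra_simps)
  finally show ?thesis .
qed

context circle_measure
begin

lemma normalize_poly:
  assumes "Re (poly_inner M q q) > 0"
  defines "u \<equiv> smult (of_real (1 / sqrt (Re (poly_inner M q q)))) q"
  shows "poly_inner M u u = 1"
proof -
  define N where "N = Re (poly_inner M q q)"
  have qq: "poly_inner M q q = of_real N"
    unfolding N_def by (rule poly_inner_self_eq_Re)
  have "N > 0" using assms by (simp add: N_def)
  moreover have "(complex_of_real (sqrt N))\<^sup>2 = of_real N"
    using \<open>N > 0\<close> by (simp flip: of_real_power)
  ultimately show ?thesis
    by (simp add: u_def N_def[symmetric] poly_inner_smult_left poly_inner_smult_right qq
        power2_eq_square[symmetric] flip: of_real_mult)
qed

lemma gram_schmidt_pair: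
  assumes pos: "\<And>q. q \<noteq> 0 \<Longrightarrow> degree q < m \<Longrightarrow> Re (poly_inner M q q) > 0"
    and "F \<noteq> 0" "R \<noteq> 0" "degree R < degree F" "degree F < m"
  obtains s t \<kappa> u v where "s > 0" "t > 0"
    "poly_inner M u u = 1" "poly_inner M v v = 1" "poly_inner M u v = 0"
    "degree u < m" "degree v < m"
    "u = smult (of_real (1 / s)) F" "v = smult (of_real (1 / t)) (R - smult \<kappa> u)"
proof -
  define s where "s = sqrt (Re (poly_inner M F F))"
  define u where "u = smult (of_real (1 / s)) F"
  have "s > 0" and uu: "poly_inner M u u = 1"
    using pos[OF \<open>F \<noteq> 0\<close> \<open>degree F < m\<close>] normalize_poly by (simp_all add: s_def u_def)
  have deg_u: "degree u = degree F"
    using \<open>s > 0\<close> by (simp add: u_def)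
  define \<kappa> where "\<kappa> = poly_inner M R u"
  define e where "e = R - smult \<kappa> u"
  have "e \<noteq> 0"
  proof
    assume "e = 0"
    then have "R = smult \<kappa> u" by (simp add: e_def)
    then show False
      using \<open>R \<noteq> 0\<close> \<open>degree R < degree F\<close> deg_u by (cases "\<kappa> = 0") auto
  qed
  have "degree e < m"
    unfolding e_def using deg_u assms(4,5)
    by (intro le_less_trans[OF degree_diff_le]) (auto intro: order.trans[OF degree_smult_le])
  have eu: "poly_inner M e u = 0"
    by (simp add: e_def \<kappa>_def poly_inner_sesquilinear uu)
  define t where "t = sqrt (Re (poly_inner M e e))"
  define v where "v = smult (of_real (1 / t)) e"
  have "t > 0" and vv: "poly_inner M v v = 1"
    using pos[OF \<open>e \<noteq> 0\<close> \<open>degree e < m\<close>] normalize_poly by (simp_all add: t_def v_def)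
  have "poly_inner M u e = 0"
    using eu poly_inner_cnj[of e u] by simp
  then have uv: "poly_inner M u v = 0"
    by (simp add: v_def poly_inner_smult_right)
  show thesis
  proof (rule that[OF \<open>s > 0\<close> \<open>t > 0\<close> uu vv uv _ _ u_def])
    show "degree u < m" "degree v < m"
      using deg_u \<open>degree F < m\<close> \<open>degree e < m\<close> \<open>t > 0\<close> by (simp_all add: v_def)
    show "v = smult (of_real (1 / t)) (R - smult \<kappa> u)"
      by (simp add: v_def e_def)
  qed
qed

lemma orthonormal_triangular_basis:
  fixes p R :: "complex poly" and a b :: complex
  assumes p_eq: "p = [:-a, 1:] * ([:-b, 1:] * R)" and "R \<noteq> 0"
    and pos: "\<And>q. q \<noteq> 0 \<Longrightarrow> degree q < degree p \<Longrightarrow> Re (poly_inner M q q) > 0"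
  obtains u v c \<gamma> \<delta> where
    "poly_inner M u u = 1" "poly_inner M v v = 1" "poly_inner M u v = 0"
    "degree u < degree p" "degree v < degree p"
    "pCons 0 u = smult a u + smult \<gamma> p"
    "pCons 0 v = smult c u + smult b v + smult \<delta> p"
    "\<And>w. \<exists>x y. [:-w, 1:] * R = smult x u + smult y v"
proof -
  define F where "F = [:-b, 1:] * R"
  have "F \<noteq> 0"
    using \<open>R \<noteq> 0\<close> by (simp add: F_def del: mult_pCons_left)
  have deg_F: "degree F = degree R + 1"
    using \<open>R \<noteq> 0\<close> unfolding F_def by (subst degree_mult_eq) auto
  have deg_p: "degree p = degree R + 2"
    unfolding p_eq F_def[symmetric] using \<open>F \<noteq> 0\<close> deg_F by (subst degree_mult_eq) auto
  obtain s t \<kappa> u v where "s > 0" "t > 0" and orthonormal: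
      "poly_inner M u u = 1" "poly_inner M v v = 1" "poly_inner M u v = 0"
    and degrees: "degree u < degree p" "degree v < degree p"
    and u_eq: "u = smult (of_real (1 / s)) F" and v_eq: "v = smult (of_real (1 / t)) (R - smult \<kappa> u)"
    by (rule gram_schmidt_pair[OF pos \<open>F \<noteq> 0\<close> \<open>R \<noteq> 0\<close>]) (use deg_F deg_p in auto)
  have shift_u: "pCons 0 u = smult a u + smult (of_real (1 / s)) p"
    by (rule poly_ext) (simp add: u_eq p_eq F_def algebra_simps)
  have shift_v: "pCons 0 v = smult ((of_real s + (b - a) * \<kappa>) / of_real t) u + smult b v
      + smult (- \<kappa> / (of_real s * of_real t)) p"
    using \<open>s > 0\<close> \<open>t > 0\<close>
    by (intro poly_ext) (simp add: v_eq u_eq p_eq F_def field_simps)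
  have span: "\<exists>x y. [:-w, 1:] * R = smult x u + smult y v" for w
  proof (intro exI)
    show "[:-w, 1:] * R = smult (of_real s + (b - w) * \<kappa>) u + smult ((b - w) * of_real t) v"
      using \<open>s > 0\<close> \<open>t > 0\<close>
      by (intro poly_ext) (simp add: v_eq u_eq F_def field_simps)
  qed
  show thesis
    by (rule that[OF orthonormal degrees shift_u shift_v span])
qed

lemma poly_inner_orthonormal_pair:
  assumes "poly_inner M u u = 1" "poly_inner M v v = 1" "poly_inner M u v = 0"
    and "poly_inner M p u = 0" "poly_inner M p v = 0"
  shows "poly_inner M (smult x u + smult y v + smult z p) (smult x' u + smult y' v) = x * cnj x' + y * cnj y'"
    and "poly_inner M (smult x u + smult y v + smult z p) (smult x u + smult y v + smult z p)
      = of_real ((cmod x)\<^sup>2 + (cmod y)\<^sup>2) + of_real ((cmod z)\<^sup>2) * poly_inner M p p"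
proof -
  have "poly_inner M v u = 0" "poly_inner M u p = 0" "poly_inner M v p = 0"
    using assms poly_inner_cnj by (metis complex_cnj_zero)+
  with assms show "poly_inner M (smult x u + smult y v + smult z p) (smult x' u + smult y' v) = x * cnj x' + y * cnj y'"
    "poly_inner M (smult x u + smult y v + smult z p) (smult x u + smult y v + smult z p)
      = of_real ((cmod x)\<^sup>2 + (cmod y)\<^sup>2) + of_real ((cmod z)\<^sup>2) * poly_inner M p p"
    by (simp_all add: poly_inner_sesquilinear complex_norm_square algebra_simps del: of_real_power)
qed

lemma shift_compression_contraction:
  assumes orthonormal: "poly_inner M u u = 1" "poly_inner M v v = 1" "poly_inner M u v = 0"
    and orthogonal: "poly_inner M p u = 0" "poly_inner M p v = 0"
    and shift_u: "pCons 0 u = smult a u + smult \<gamma> p"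
    and shift_v: "pCons 0 v = smult c u + smult b v + smult \<delta> p"
  shows "(cmod (x * a + y * c))\<^sup>2 + (cmod (y * b))\<^sup>2 \<le> (cmod x)\<^sup>2 + (cmod y)\<^sup>2"
proof -
  note pair = poly_inner_orthonormal_pair[OF orthonormal orthogonal]
  define h where "h = smult x u + smult y v"
  have shift_h: "pCons 0 h = smult (x * a + y * c) u + smult (y * b) v + smult (x * \<gamma> + y * \<delta>) p"
    unfolding h_def by (rule pCons_zero_smult_add[OF shift_u shift_v])
  have "of_real ((cmod x)\<^sup>2 + (cmod y)\<^sup>2) = poly_inner M h h"
    using pair(2)[of x y 0] by (simp add: h_def)
  also have "\<dots> = poly_inner M (pCons 0 h) (pCons 0 h)"
    by (rule poly_inner_pCons_zero[symmetric])
  also have "\<dots> = of_real ((cmod (x * a + y * c))\<^sup>2 + (cmod (y * b))\<^sup>2)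
      + of_real ((cmod (x * \<gamma> + y * \<delta>))\<^sup>2) * poly_inner M p p"
    unfolding shift_h by (rule pair(2))
  finally have "(cmod x)\<^sup>2 + (cmod y)\<^sup>2
      = (cmod (x * a + y * c))\<^sup>2 + (cmod (y * b))\<^sup>2 + (cmod (x * \<gamma> + y * \<delta>))\<^sup>2 * Re (poly_inner M p p)"
    by (subst (asm) complex_eq_iff) simp
  moreover have "Re (poly_inner M p p) \<ge> 0"
    by (simp add: poly_inner_self)
  ultimately show ?thesis
    by (smt (verit) mult_nonneg_nonneg zero_le_power2)
qed

lemma shift_numerical_range_near:
  assumes p_eq: "p = [:-a, 1:] * ([:-b, 1:] * R)" and "R \<noteq> 0"
    and pos: "\<And>q. q \<noteq> 0 \<Longrightarrow> degree q < degree p \<Longrightarrow> Re (poly_inner M q q) > 0"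
    and orth: "\<And>q. degree q < degree p \<Longrightarrow> poly_inner M p q = 0"
    and near: "cmod w = 1" "cmod (a - w) < r" "cmod (b - w) < r"
    and g_def: "g = [:-\<zeta>, 1:] * R"
  shows "cmod (poly_inner M (pCons 0 g) g - w * poly_inner M g g) < 2 * r * Re (poly_inner M g g)"
proof -
  obtain u v c \<gamma> \<delta> where orthonormal: "poly_inner M u u = 1" "poly_inner M v v = 1" "poly_inner M u v = 0"
    and "degree u < degree p" "degree v < degree p"
    and shift_u: "pCons 0 u = smult a u + smult \<gamma> p"
    and shift_v: "pCons 0 v = smult c u + smult b v + smult \<delta> p"
    and span: "\<And>w. \<exists>x y. [:-w, 1:] * R = smult x u + smult y v"
    by (rule orthonormal_triangular_basis[OF p_eq \<open>R \<noteq> 0\<close> pos]) blast+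
  have orthogonal: "poly_inner M p u = 0" "poly_inner M p v = 0"
    using orth \<open>degree u < degree p\<close> \<open>degree v < degree p\<close> by blast+
  note pair = poly_inner_orthonormal_pair[OF orthonormal orthogonal]
  obtain x y where g_eq: "g = smult x u + smult y v"
    using span unfolding g_def by blast
  have "g \<noteq> 0"
    using \<open>R \<noteq> 0\<close> by (simp add: g_def del: mult_pCons_left)
  then have "x \<noteq> 0 \<or> y \<noteq> 0"
    using g_eq by auto
  have "poly_inner M g g = of_real ((cmod x)\<^sup>2 + (cmod y)\<^sup>2)"
    using pair(2)[of x y 0] by (simp add: g_eq)
  moreover have "poly_inner M (pCons 0 g) g = (x * a + y * c) * cnj x + y * b * cnj y"
    unfolding g_eq pCons_zero_smult_add[OF shift_u shift_v] pair(1) by simp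
  ultimately show ?thesis
    using triangular_contraction_numerical_range[OF
        shift_compression_contraction[OF orthonormal orthogonal shift_u shift_v] near \<open>x \<noteq> 0 \<or> y \<noteq> 0\<close>]
    by simp
qed

lemma no_two_zeros_near_support_point:
  assumes p_eq: "p = [:-a, 1:] * ([:-b, 1:] * R)" and "R \<noteq> 0"
    and pos: "\<And>q. q \<noteq> 0 \<Longrightarrow> degree q < degree p \<Longrightarrow> Re (poly_inner M q q) > 0"
    and orth: "\<And>q. degree q < degree p \<Longrightarrow> poly_inner M p q = 0"
    and "z0 \<in> msupp M" "0 \<le> d" and far: "\<And>z. z \<in> msupp M \<Longrightarrow> z \<noteq> z0 \<Longrightarrow> d \<le> cmod (z - z0)"
    and near: "cmod (a - z0) < d\<^sup>2 / 4" "cmod (b - z0) < d\<^sup>2 / 4"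
  shows False
proof -
  have "cmod z0 = 1"
    using msupp_subset_sphere \<open>z0 \<in> msupp M\<close> by auto
  define g where "g = [:-z0, 1:] * R"
  define W where "W = poly_inner M (pCons 0 g) g"
  define N where "N = Re (poly_inner M g g)"
  have gg: "poly_inner M g g = of_real N"
    unfolding N_def by (rule poly_inner_self_eq_Re)
  have close: "cmod (W - z0 * of_real N) < 2 * (d\<^sup>2 / 4) * N"
    using shift_numerical_range_near[OF p_eq \<open>R \<noteq> 0\<close> pos orth \<open>cmod z0 = 1\<close> near g_def]
    by (simp add: W_def gg)
  have "cnj z0 * z0 = 1"
    using complex_norm_square[of z0] \<open>cmod z0 = 1\<close> by (simp add: mult.commute)
  have "poly g z0 = 0"
    by (simp add: g_def)
  then have "Re (cnj z0 * W) \<le> (1 - d\<^sup>2 / 2) * N"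
    unfolding W_def N_def using \<open>cmod z0 = 1\<close> \<open>0 \<le> d\<close> far by (intro Re_cnj_poly_inner_pCons_zero_le)
  moreover have "Re (cnj z0 * W) = N + Re (cnj z0 * (W - z0 * of_real N))"
    using \<open>cnj z0 * z0 = 1\<close> by (simp add: right_diff_distrib mult.assoc[symmetric])
  moreover have "- cmod (W - z0 * of_real N) \<le> Re (cnj z0 * (W - z0 * of_real N))"
    using abs_Re_le_cmod[of "cnj z0 * (W - z0 * of_real N)"] \<open>cmod z0 = 1\<close> by (simp add: norm_mult)
  moreover have "(1 - d\<^sup>2 / 2) * N = N - 2 * (d\<^sup>2 / 4) * N"
    by (simp add: algebra_simps)
  ultimately show False
    using close by linarith
qed

end

lemma obtain_two_linear_factors:
  fixes p :: "'a::idom poly"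
  assumes "p \<noteq> 0" and "(\<Sum>z\<in>T. order z p) > 1"
  obtains a b R where "a \<in> T" "b \<in> T" "p = [:-a, 1:] * ([:-b, 1:] * R)"
proof -
  have "finite T"
    using assms(2) sum.infinite by (metis not_less_zero)
  have "(\<Sum>z\<in>T. order z p) \<noteq> 0"
    using assms(2) by simp
  then obtain a where "a \<in> T" "order a p \<noteq> 0"
    by (rule sum.not_neutral_contains_not_neutral)
  then have "[:-a, 1:] dvd p"
    by (simp add: order_root flip: poly_eq_0_iff_dvd)
  then obtain q where p_eq: "p = [:-a, 1:] * q"
    by (elim dvdE)
  have "order z p = (if z = a then 1 else 0) + order z q" for z
    using \<open>p \<noteq> 0\<close> order_power_n_n[of a 1] unfolding p_eq
    by (subst order_mult) (auto intro: order_0I)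
  then have "(\<Sum>z\<in>T. order z p) = 1 + (\<Sum>z\<in>T. order z q)"
    using \<open>finite T\<close> \<open>a \<in> T\<close> by (simp add: sum.distrib)
  then have "(\<Sum>z\<in>T. order z q) \<noteq> 0"
    using assms(2) by simp
  then obtain b where "b \<in> T" "order b q \<noteq> 0"
    by (rule sum.not_neutral_contains_not_neutral)
  then have "[:-b, 1:] dvd q"
    by (simp add: order_root flip: poly_eq_0_iff_dvd)
  then obtain R where "q = [:-b, 1:] * R"
    by (elim dvdE)
  with \<open>a \<in> T\<close> \<open>b \<in> T\<close> p_eq show thesis
    using that by blast
qed

theorem theoremA2p5:
  fixes M :: "complex measure" and z0 :: complex and n :: nat and p :: "complex poly"
  assumes "circle_prob_measure M"
    and "infinite (msupp M) \<or> n < card (msupp M)"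
    and "monic_OP M n p"
    and "z0 \<in> msupp M"
    and "\<exists>e>0. msupp M \<inter> ball z0 e = {z0}"
  shows "(\<Sum>z\<in>{z. poly p z = 0 \<and> cmod (z - z0) < (infdist z0 (msupp M - {z0}))\<^sup>2 / 4}.
            order z p) \<le> 1"
proof (rule ccontr)
  interpret circle_measure M
    by (rule circle_measure.intro) fact
  define d where "d = infdist z0 (msupp M - {z0})"
  have deg_p: "degree p = n" and "p \<noteq> 0"
    using assms(3) by (auto simp: monic_OP_def)
  assume "\<not> ?thesis"
  then obtain a b R where near: "cmod (a - z0) < d\<^sup>2 / 4" "cmod (b - z0) < d\<^sup>2 / 4"
    and p_eq: "p = [:-a, 1:] * ([:-b, 1:] * R)"
    using obtain_two_linear_factors[OF \<open>p \<noteq> 0\<close>] unfolding d_def by (metis (lifting) mem_Collect_eq not_le)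
  show False
  proof (rule no_two_zeros_near_support_point[OF p_eq _ _ _ assms(4) _ _ near])
    show "R \<noteq> 0"
      using \<open>p \<noteq> 0\<close> p_eq by auto
    show "Re (poly_inner M q q) > 0" if "q \<noteq> 0" "degree q < degree p" for q
      using Re_poly_inner_self_pos[OF that(1)] assms(2) that(2) deg_p by auto
    show "poly_inner M p q = 0" if "degree q < degree p" for q
      using assms(3) that deg_p by (simp add: monic_OP_def poly_inner_def)
    show "0 \<le> d"
      unfolding d_def by (rule infdist_nonneg)
    show "d \<le> cmod (z - z0)" if "z \<in> msupp M" "z \<noteq> z0" for z
      unfolding d_def using that by (metis infdist_le DiffI dist_norm norm_minus_commute singletonD)
  qed
qed

end
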